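(* Let $A\in\mathbb{R}^{2\times 2}$ be a symmetric matrix with eigenvalues $1$ and $\lambda>0$. Identify $\mathbb{C}$ with $\mathbb{R}^2$ via $x+iy\leftrightarrow (x,y)^t$, so that $A$ acts on $\mathbb{C}$ as an $\mathbb{R}$-linear map. Then \[ \{h\cdot\overline{Ah} : h\in\mathbb{C}\}=\Sigma\Bigl(\arcsin\tfrac{|\lambda-1|}{\lambda+1}\Bigr), \] where $h\cdot\overline{Ah}$ is the product of the complex numbers $h$ and $\overline{Ah}$ (complex conjugate of $Ah$).
   Context: For $0\le\varphi\le\frac{\pi}{2}$, the sector is $\Sigma(\varphi):=\{z\in\mathbb{C}\setminus\{0\}: |\arg z|\le\varphi\}\cup\{0\}$, where $\arg$ is the principal argument with values in $(-\pi,\pi]$. *)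

theory Defs
  imports "HOL-Analysis.Analysis"
begin

definition sector :: "real \<Rightarrow> complex set" where
  "sector phi = {z. z \<noteq> 0 \<and> \<bar>Arg z\<bar> \<le> phi} \<union> {0}"

definition vec_of_complex :: "complex \<Rightarrow> real^2" where
  "vec_of_complex z = vector [Re z, Im z]"

definition complex_of_vec :: "real^2 \<Rightarrow> complex" where
  "complex_of_vec v = Complex (v $ 1) (v $ 2)"

definition mat_act :: "real^2^2 \<Rightarrow> complex \<Rightarrow> complex" where
  "mat_act A h = complex_of_vec (A *v vec_of_complex h)"

definition mat_eigenvalues :: "real^'n^'n \<Rightarrow> real set" where
  "mat_eigenvalues A = {mu. \<exists>v. v \<noteq> 0 \<and> A *v v = mu *\<^sub>R v}"

end

theory Submission
  imports Defs
begin

text \<open>A symmetric matrix with eigenvalues \<open>1\<close> and \<open>\<lambda>\<close> has an orthonormal eigenbasis,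
  which in complex notation is \<open>u, \<i>u\<close> for a unit \<open>u\<close>. Writing \<open>h = (a + \<i>b) u\<close> gives
  \<open>h \<cdot> cnj (Ah) = (a + \<i>b)(a - \<i>\<lambda>b) = a\<^sup>2 + \<lambda>b\<^sup>2 + \<i>(1 - \<lambda>)ab\<close>. The system
  \<open>a\<^sup>2 + \<lambda>b\<^sup>2 = X, ab = t\<close> with \<open>X \<ge> 0\<close> is solvable iff \<open>4\<lambda>t\<^sup>2 \<le> X\<^sup>2\<close>, so the attained
  values are the \<open>X + \<i>Y\<close> with \<open>X \<ge> 0\<close> and \<open>4\<lambda>Y\<^sup>2 \<le> (\<lambda> - 1)\<^sup>2X\<^sup>2\<close>, which is exactly the
  sector of half-angle \<open>arcsin (|\<lambda> - 1| / (\<lambda> + 1))\<close>.\<close>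

lemma sector_arcsin_iff:
  assumes "0 \<le> s" "s \<le> 1"
  shows "z \<in> sector (arcsin s) \<longleftrightarrow> 0 \<le> Re z \<and> \<bar>Im z\<bar> \<le> s * cmod z"
proof (cases "z = 0")
  case True
  then show ?thesis by (simp add: sector_def)
next
  case False
  define t where "t = Arg z"
  have t: "-pi < t" "t \<le> pi"
    using Arg_bounded t_def by auto
  have "cmod z > 0"
    using False by simp
  have "sin \<bar>t\<bar> = \<bar>sin t\<bar>"
    using t sin_ge_zero[of t] sin_ge_zero[of "-t"] by (auto simp: abs_if)
  then have cos_t: "cos \<bar>t\<bar> = Re z / cmod z" and sin_t: "sin \<bar>t\<bar> = \<bar>Im z\<bar> / cmod z"
    using cos_Arg[OF False] sin_Arg[OF False] by (simp_all add: t_def)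
  have arcsin_s: "0 \<le> arcsin s" "arcsin s \<le> pi/2"
    using assms arcsin_bounded[of s] arcsin_le_arcsin[of 0 s] by auto
  have "\<bar>t\<bar> \<le> arcsin s \<longleftrightarrow> 0 \<le> cos \<bar>t\<bar> \<and> sin \<bar>t\<bar> \<le> s"
  proof
    assume t_le: "\<bar>t\<bar> \<le> arcsin s"
    then have "sin \<bar>t\<bar> \<le> sin (arcsin s)"
      using arcsin_s by (intro sin_monotone_2pi_le) auto
    moreover have "0 \<le> cos \<bar>t\<bar>"
      using t_le arcsin_s by (intro cos_ge_zero) auto
    ultimately show "0 \<le> cos \<bar>t\<bar> \<and> sin \<bar>t\<bar> \<le> s"
      using assms by simp
  next
    assume cs: "0 \<le> cos \<bar>t\<bar> \<and> sin \<bar>t\<bar> \<le> s"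
    have "\<bar>t\<bar> \<le> pi/2"
    proof (rule ccontr)
      assume "\<not> \<bar>t\<bar> \<le> pi/2"
      then have "cos \<bar>t\<bar> < 0"
        using t by (intro cos_lt_zero_pi) auto
      with cs show False by simp
    qed
    then have "arcsin (sin \<bar>t\<bar>) \<le> arcsin s"
      using cs assms by (intro arcsin_le_arcsin) auto
    then show "\<bar>t\<bar> \<le> arcsin s"
      using \<open>\<bar>t\<bar> \<le> pi/2\<close> arcsin_sin[of "\<bar>t\<bar>"] by simp
  qed
  also have "\<dots> \<longleftrightarrow> 0 \<le> Re z \<and> \<bar>Im z\<bar> \<le> s * cmod z"
    using cos_t sin_t \<open>cmod z > 0\<close> by (simp add: zero_le_divide_iff pos_divide_le_eq)
  finally show ?thesis
    using False by (simp add: sector_def t_def)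
qed

lemma sector_arcsin_ratio_iff:
  fixes l :: real
  assumes "l > 0"
  shows "z \<in> sector (arcsin (\<bar>l - 1\<bar> / (l + 1))) \<longleftrightarrow>
    0 \<le> Re z \<and> 4 * l * (Im z)\<^sup>2 \<le> (l - 1)\<^sup>2 * (Re z)\<^sup>2"
proof -
  let ?s = "\<bar>l - 1\<bar> / (l + 1)"
  have s: "0 \<le> ?s" "?s \<le> 1"
    using assms by auto
  have "\<bar>Im z\<bar> \<le> ?s * cmod z \<longleftrightarrow> (Im z)\<^sup>2 \<le> (?s * cmod z)\<^sup>2"
    using s by (metis abs_le_square_iff abs_of_nonneg mult_nonneg_nonneg norm_ge_zero)
  also have "(?s * cmod z)\<^sup>2 = (l - 1)\<^sup>2 / (l + 1)\<^sup>2 * ((Re z)\<^sup>2 + (Im z)\<^sup>2)"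
    by (simp add: power_mult_distrib power_divide cmod_power2)
  also have "(Im z)\<^sup>2 \<le> \<dots> \<longleftrightarrow> (l + 1)\<^sup>2 * (Im z)\<^sup>2 \<le> (l - 1)\<^sup>2 * ((Re z)\<^sup>2 + (Im z)\<^sup>2)"
    using assms by (simp add: field_simps)
  also have "\<dots> \<longleftrightarrow> 4 * l * (Im z)\<^sup>2 \<le> (l - 1)\<^sup>2 * (Re z)\<^sup>2"
    by (simp add: algebra_simps power2_eq_square)
  finally show ?thesis
    using sector_arcsin_iff[OF s] by simp
qed

lemma weighted_squares_with_product:
  fixes l x t :: real
  assumes "l > 0" "0 \<le> x" "4 * l * t\<^sup>2 \<le> x\<^sup>2"
  obtains a b where "a\<^sup>2 + l * b\<^sup>2 = x" "a * b = t"
proof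
  define S where "S = sqrt (x\<^sup>2 - 4 * l * t\<^sup>2)"
  have S: "0 \<le> S" "S\<^sup>2 = x\<^sup>2 - 4 * l * t\<^sup>2"
    using assms(3) by (simp_all add: S_def)
  have "S\<^sup>2 \<le> x\<^sup>2"
    using S(2) assms(1) by simp
  then have "S \<le> x"
    using assms(2) by (rule power2_le_imp_le)
  have "S = x" if "t = 0"
    using that assms(2) by (simp add: S_def)
  define a where "a = sqrt ((x + S) / 2)"
  define b where "b = sgn t * sqrt ((x - S) / (2 * l))"
  have a2: "a\<^sup>2 = (x + S) / 2" and b2: "l * b\<^sup>2 = (x - S) / 2"
    using S \<open>S \<le> x\<close> \<open>t = 0 \<Longrightarrow> S = x\<close> assms(1,2) by (simp_all add: a_def b_def power_mult_distrib sgn_if)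
  show "a\<^sup>2 + l * b\<^sup>2 = x"
    using a2 b2 by simp
  have "(x + S) / 2 * ((x - S) / (2 * l)) = t\<^sup>2"
    using S assms(1) by (simp add: field_simps power2_eq_square)
  then show "a * b = t"
    by (simp add: a_def b_def real_sqrt_mult[symmetric] mult.left_commute sgn_mult_abs)
qed

lemma diagonal_form_image:
  fixes l :: real
  assumes "l > 0"
  shows "{w * cnj (Complex (Re w) (l * Im w)) | w. True} = sector (arcsin (\<bar>l - 1\<bar> / (l + 1)))"
proof (intro set_eqI iffI)
  fix z
  assume "z \<in> {w * cnj (Complex (Re w) (l * Im w)) | w. True}"
  then obtain a b where z: "Re z = a\<^sup>2 + l * b\<^sup>2" "Im z = (1 - l) * (a * b)"
    by (force simp: power2_eq_square algebra_simps)
  have "(l - 1)\<^sup>2 * (a\<^sup>2 + l * b\<^sup>2)\<^sup>2 - 4 * l * ((1 - l) * (a * b))\<^sup>2 = ((l - 1) * (a\<^sup>2 - l * b\<^sup>2))\<^sup>2"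
    by (simp add: algebra_simps power2_eq_square)
  then have "4 * l * ((1 - l) * (a * b))\<^sup>2 \<le> (l - 1)\<^sup>2 * (a\<^sup>2 + l * b\<^sup>2)\<^sup>2"
    by (metis diff_ge_0_iff_ge zero_le_power2)
  then show "z \<in> sector (arcsin (\<bar>l - 1\<bar> / (l + 1)))"
    using z assms by (simp add: sector_arcsin_ratio_iff)
next
  fix z
  assume "z \<in> sector (arcsin (\<bar>l - 1\<bar> / (l + 1)))"
  then have z: "0 \<le> Re z" "4 * l * (Im z)\<^sup>2 \<le> (l - 1)\<^sup>2 * (Re z)\<^sup>2"
    using sector_arcsin_ratio_iff[OF assms] by blast+
  \<comment> \<open>the intended value of \<open>ab\<close>; for \<open>l = 1\<close> the bound forces \<open>Im z = 0\<close>\<close>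
  define t where "t = (if l = 1 then 0 else Im z / (1 - l))"
  have "Im z = (1 - l) * t \<and> 4 * l * t\<^sup>2 \<le> (Re z)\<^sup>2"
  proof (cases "l = 1")
    case True
    then show ?thesis
      using z by (simp add: t_def)
  next
    case False
    then have "(l - 1)\<^sup>2 * (4 * l * t\<^sup>2) \<le> (l - 1)\<^sup>2 * (Re z)\<^sup>2"
      using z(2) by (simp add: t_def power_divide power2_commute[of 1 l])
    then show ?thesis
      using False by (simp add: t_def)
  qed
  then obtain a b where "a\<^sup>2 + l * b\<^sup>2 = Re z" "(1 - l) * (a * b) = Im z"
    using weighted_squares_with_product[OF assms z(1)] by metis
  then have "z = Complex a b * cnj (Complex (Re (Complex a b)) (l * Im (Complex a b)))"
    by (simp add: complex_eq_iff power2_eq_square algebra_simps)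
  then show "z \<in> {w * cnj (Complex (Re w) (l * Im w)) | w. True}"
    by blast
qed

lemma complex_of_vec_of_complex [simp]: "complex_of_vec (vec_of_complex z) = z"
  by (simp add: vec_of_complex_def complex_of_vec_def)

lemma vec_of_complex_of_vec [simp]: "vec_of_complex (complex_of_vec v) = v"
  by (simp add: vec_of_complex_def complex_of_vec_def vec_eq_iff forall_2)

lemma complex_of_vec_scaleR: "complex_of_vec (c *\<^sub>R v) = c *\<^sub>R complex_of_vec v"
  by (simp add: complex_of_vec_def complex_eq_iff)

lemma vec_of_complex_scaleR: "vec_of_complex (c *\<^sub>R z) = c *\<^sub>R vec_of_complex z"
  by (simp add: vec_of_complex_def vec_eq_iff forall_2)

lemma complex_of_vec_eq_0_iff [simp]: "complex_of_vec v = 0 \<longleftrightarrow> v = 0"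
  by (simp add: complex_of_vec_def complex_eq_iff vec_eq_iff forall_2)

lemma Re_mat_act [simp]: "Re (mat_act A h) = A$1$1 * Re h + A$1$2 * Im h"
  and Im_mat_act [simp]: "Im (mat_act A h) = A$2$1 * Re h + A$2$2 * Im h"
  by (simp_all add: mat_act_def complex_of_vec_def vec_of_complex_def matrix_vector_mult_def sum_2)

lemma linear_mat_act: "linear (mat_act A)"
  by (rule linearI) (simp_all add: complex_eq_iff algebra_simps)

lemma mat_eigenvalues_mat_act:
  "mu \<in> mat_eigenvalues A \<longleftrightarrow> (\<exists>u. u \<noteq> 0 \<and> mat_act A u = mu *\<^sub>R u)"
proof
  assume "mu \<in> mat_eigenvalues A"
  then obtain v where "v \<noteq> 0" "A *v v = mu *\<^sub>R v"
    by (auto simp: mat_eigenvalues_def)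
  then show "\<exists>u. u \<noteq> 0 \<and> mat_act A u = mu *\<^sub>R u"
    by (intro exI[of _ "complex_of_vec v"]) (simp add: mat_act_def complex_of_vec_scaleR)
next
  assume "\<exists>u. u \<noteq> 0 \<and> mat_act A u = mu *\<^sub>R u"
  then obtain u where u: "u \<noteq> 0" "complex_of_vec (A *v vec_of_complex u) = mu *\<^sub>R u"
    by (auto simp: mat_act_def)
  have "A *v vec_of_complex u = mu *\<^sub>R vec_of_complex u"
    using arg_cong[OF u(2), of vec_of_complex] by (simp add: vec_of_complex_scaleR)
  moreover have "vec_of_complex u \<noteq> 0"
    using u(1) complex_of_vec_eq_0_iff[of "vec_of_complex u"] by simp
  ultimately show "mu \<in> mat_eigenvalues A"
    unfolding mat_eigenvalues_def by blast
qed

lemma mat_eigenvalue_det_eq_0: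
  fixes A :: "real^'n^'n"
  assumes "mu \<in> mat_eigenvalues A"
  shows "det (A - mu *\<^sub>R mat 1) = 0"
proof -
  obtain v where "v \<noteq> 0" "A *v v = mu *\<^sub>R v"
    using assms by (auto simp: mat_eigenvalues_def)
  then have "(A - mu *\<^sub>R mat 1) *v v = (A - mu *\<^sub>R mat 1) *v 0"
    by (simp add: matrix_vector_mult_diff_rdistrib flip: scaleR_matrix_vector_assoc)
  with \<open>v \<noteq> 0\<close> have "\<not> invertible (A - mu *\<^sub>R mat 1)"
    using inj_matrix_vector_mult by (metis injD)
  then show ?thesis
    by (simp add: invertible_det_nz)
qed

lemma mat_eigenvalue_char_eq_2:
  fixes A :: "real^2^2"
  assumes "mu \<in> mat_eigenvalues A"
  shows "(A$1$1 - mu) * (A$2$2 - mu) = A$1$2 * A$2$1"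
  using mat_eigenvalue_det_eq_0[OF assms] by (simp add: det_2 mat_def)

lemma symmetric_mat_act_mult_ii:
  assumes "transpose A = A" "mat_act A u = mu *\<^sub>R u"
  shows "mat_act A (\<i> * u) = (A$1$1 + A$2$2 - mu) *\<^sub>R (\<i> * u)"
proof -
  have "A$2$1 = A$1$2"
    using arg_cong[OF assms(1), of "\<lambda>B. B$1$2"] by (simp add: transpose_def)
  with assms(2) show ?thesis
    by (auto simp: complex_eq_iff algebra_simps)
qed

lemma symmetric_mat_act_unit_eigenbasis:
  assumes "transpose A = A" "mat_eigenvalues A = {1, lambda}"
  obtains u where "cmod u = 1" "mat_act A u = u" "mat_act A (\<i> * u) = lambda *\<^sub>R (\<i> * u)"
proof -
  obtain v where "v \<noteq> 0" "mat_act A v = v"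
    using assms(2) mat_eigenvalues_mat_act[of 1 A] by auto
  define u where "u = sgn v"
  have u: "cmod u = 1" "mat_act A u = u"
    using \<open>v \<noteq> 0\<close> \<open>mat_act A v = v\<close> linear_scale[OF linear_mat_act]
    by (simp_all add: u_def norm_sgn sgn_div_norm)
  define tau where "tau = A$1$1 + A$2$2 - 1"
  have tau: "mat_act A (\<i> * u) = tau *\<^sub>R (\<i> * u)"
    using symmetric_mat_act_mult_ii[OF assms(1), of u 1] u by (simp add: tau_def)
  have "\<i> * u \<noteq> 0"
    using u by auto
  then have "tau \<in> {1, lambda}"
    using tau assms(2) mat_eigenvalues_mat_act by blast
  \<comment> \<open>the characteristic equations at \<open>1\<close> and \<open>lambda\<close> differ by this product\<close>
  moreover have "(lambda - 1) * (lambda - tau) = 0"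
    using mat_eigenvalue_char_eq_2[of 1 A] mat_eigenvalue_char_eq_2[of lambda A] assms(2)
    by (simp add: tau_def algebra_simps)
  ultimately have "tau = lambda"
    by auto
  with u tau show ?thesis
    using that by blast
qed

lemma mat_act_in_eigenbasis:
  assumes "mat_act A u = u" "mat_act A (\<i> * u) = lambda *\<^sub>R (\<i> * u)"
  shows "mat_act A (w * u) = Complex (Re w) (lambda * Im w) * u"
proof -
  have "w * u = Re w *\<^sub>R u + Im w *\<^sub>R (\<i> * u)"
    by (simp add: complex_eq_iff scaleR_conv_of_real algebra_simps)
  then have "mat_act A (w * u) = Re w *\<^sub>R u + (Im w * lambda) *\<^sub>R (\<i> * u)"
    using assms linear_add[OF linear_mat_act] linear_scale[OF linear_mat_act] by simp
  then show ?thesis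
    by (simp add: complex_eq_iff scaleR_conv_of_real algebra_simps)
qed

theorem lemma3:
  fixes A :: "real^2^2" and lambda :: real
  assumes "transpose A = A"
    and "lambda > 0"
    and "mat_eigenvalues A = {1, lambda}"
  shows "{h * cnj (mat_act A h) | h. True} = sector (arcsin (\<bar>lambda - 1\<bar> / (lambda + 1)))"
proof -
  obtain u where u: "cmod u = 1" "mat_act A u = u" "mat_act A (\<i> * u) = lambda *\<^sub>R (\<i> * u)"
    using symmetric_mat_act_unit_eigenbasis[OF assms(1,3)] .
  have "u * cnj u = 1"
    using u(1) by (simp add: complex_norm_square[symmetric])
  have rotate: "w * u * cnj (mat_act A (w * u)) = w * cnj (Complex (Re w) (lambda * Im w))" for w
  proof -
    have "w * u * cnj (mat_act A (w * u)) = w * cnj (Complex (Re w) (lambda * Im w)) * (u * cnj u)"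
      unfolding mat_act_in_eigenbasis[OF u(2,3)] by (simp add: mult_ac)
    with \<open>u * cnj u = 1\<close> show ?thesis
      by simp
  qed
  have "u \<noteq> 0"
    using u(1) by auto
  then have "{h * cnj (mat_act A h) | h. True} = {w * cnj (Complex (Re w) (lambda * Im w)) | w. True}"
    by (auto simp flip: rotate) (metis nonzero_divide_eq_eq)
  also have "\<dots> = sector (arcsin (\<bar>lambda - 1\<bar> / (lambda + 1)))"
    by (rule diagonal_form_image[OF assms(2)])
  finally show ?thesis .
qed

end
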